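(* Let $a,b,c,d$ be real numbers such that the integral converges and the expressions below are defined. Then \[ \int_0^1\!\!\int_0^1\frac{(xy)^b\left[(xy)^{d-1}-x^{a-1}y^{c-1}\right]}{-\left[1-(xy)^b\right]\log(xy)}\,dx\,dy=\sum_{n=1}^\infty\left(\frac{1}{bn+d}-\frac{\log\left(1+\frac{c-a}{bn+a}\right)}{c-a}\right)=\frac{\log\left(\frac{\Gamma\left(\frac{b+c}{b}\right)}{\Gamma\left(\frac{a+b}{b}\right)}\right)}{c-a}-\frac{\psi\left(\frac{b+d}{b}\right)}{b}, \] where $\Gamma$ is Euler's gamma function and $\psi=\Gamma'/\Gamma$ is the digamma function. *)

theory Defs
  imports "HOL-Analysis.Analysis"
begin

definition integrand36 :: "real \<Rightarrow> real \<Rightarrow> real \<Rightarrow> real \<Rightarrow> real \<times> real \<Rightarrow> real" where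
  "integrand36 a b c d = (\<lambda>(x, y). (x*y) powr b * ((x*y) powr (d-1) - x powr (a-1) * y powr (c-1))
              / (- (1 - (x*y) powr b) * ln (x*y)))"

end

theory Submission
  imports Defs "HOL-Real_Asymp.Real_Asymp"
begin

text \<open>
  Expanding \<open>1 / (1 - (x y)\<^sup>b)\<close> as a geometric series turns the integrand into
  \<open>\<Sum>\<^sub>m (x y)\<^bsup>b(m+1)\<^esup> ((x y)\<^bsup>d-1\<^esup> - x\<^bsup>a-1\<^esup> y\<^bsup>c-1\<^esup>) / (- ln (x y))\<close>.
  Its partial sums are dominated by the integrand itself, so by dominated convergence the series
  may be integrated termwise. Each term is a difference of integrals
  \<open>\<integral>\<integral> x\<^bsup>p-1\<^esup> y\<^bsup>q-1\<^esup> / (- ln (x y))\<close>; writing \<open>1 / (- ln t) = \<integral>\<^sub>0\<^sup>\<infinity> t\<^sup>z dz\<close> and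
  integrating over \<open>x\<close> and \<open>y\<close> first (Tonelli) reduces it to
  \<open>\<integral>\<^sub>0\<^sup>\<infinity> dz / ((p + z) (q + z)) = ln (q / p) / (q - p)\<close>. Finally the resulting series is summed
  with the limit formula \<open>\<psi>(D) = lim (ln n - \<Sum>k<n. 1 / (D + k))\<close> and Euler's product
  for \<open>ln \<Gamma>\<close>.
\<close>

lemma nn_integral_powr_exponent:
  fixes t :: real
  assumes "0 < t" and "t < 1"
  shows "(\<integral>\<^sup>+z. ennreal (t powr z) * indicator {0..} z \<partial>lborel) = ennreal (- 1 / ln t)"
proof -
  have ln_t: "ln t < 0" using assms by simp
  have "(\<integral>\<^sup>+z. ennreal (exp (z * ln t)) * indicator {0..} z \<partial>lborel) = 0 - exp (0 * ln t) / ln t"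
  proof (rule nn_integral_FTC_atLeast)
    fix x :: real
    show "((\<lambda>z. exp (z * ln t) / ln t) has_real_derivative exp (x * ln t)) (at x)"
      using ln_t by (auto intro!: derivative_eq_intros)
  next
    show "((\<lambda>z. exp (z * ln t) / ln t) \<longlongrightarrow> 0) at_top"
      using ln_t by real_asymp
  qed auto
  then show ?thesis
    using \<open>0 < t\<close> by (simp add: powr_def mult.commute)
qed

lemma nn_integral_powr_unit_interval:
  fixes s :: real
  assumes "s > 0"
  shows "(\<integral>\<^sup>+x. ennreal (x powr (s - 1)) * indicator {0<..1} x \<partial>lborel) = ennreal (1 / s)"
proof -
  have "(\<integral>\<^sup>+x. ennreal (x powr (s - 1)) * indicator {0..1} x \<partial>lborel) = ennreal (1 / s)"
    using nn_integral_has_integral_lebesgue'[OF _ has_integral_powr_from_0[of "s - 1" 1]] assms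
    by simp
  moreover have "AE x in lborel. ennreal (x powr (s - 1)) * indicator {0..1} x
                   = ennreal (x powr (s - 1)) * indicator {0<..1} x"
    using AE_lborel_singleton[of 0] by eventually_elim (auto simp: indicator_def)
  ultimately show ?thesis
    by (simp add: nn_integral_cong_AE)
qed

definition inv_log_mean :: "real \<Rightarrow> real \<Rightarrow> real" where
  "inv_log_mean p q = (if p = q then 1 / p else ln (q / p) / (q - p))"

lemma inv_log_mean_nonneg: "p > 0 \<Longrightarrow> q > 0 \<Longrightarrow> inv_log_mean p q \<ge> 0"
  unfolding inv_log_mean_def
  by (cases "p < q") (auto simp: divide_nonneg_nonneg divide_nonpos_nonpos)

lemma nn_integral_inverse_shifted_product:
  fixes p q :: real
  assumes p: "p > 0" and q: "q > 0"
  shows "(\<integral>\<^sup>+z. ennreal (1 / ((p + z) * (q + z))) * indicator {0..} z \<partial>lborel) = ennreal (inv_log_mean p q)"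
proof (cases "p = q")
  case True
  have "(\<integral>\<^sup>+z. ennreal (1 / ((p + z) * (q + z))) * indicator {0..} z \<partial>lborel) = 0 - (- 1 / (p + 0))"
  proof (rule nn_integral_FTC_atLeast)
    fix x :: real assume "0 \<le> x"
    then have "((\<lambda>z. - 1 / (p + z)) has_real_derivative 1 / ((p + x) * (p + x))) (at x)"
      using p by (auto intro!: derivative_eq_intros simp: power2_eq_square)
    then show "((\<lambda>z. - 1 / (p + z)) has_real_derivative 1 / ((p + x) * (q + x))) (at x)"
      using True by simp
  next
    show "((\<lambda>z. - 1 / (p + z)) \<longlongrightarrow> 0) at_top" by real_asymp
  qed (use p q in auto)
  then show ?thesis using True by (simp add: inv_log_mean_def)
next
  case False
  have "(\<integral>\<^sup>+z. ennreal (1 / ((p + z) * (q + z))) * indicator {0..} z \<partial>lborel)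
      = 0 - (ln (p + 0) - ln (q + 0)) / (q - p)"
  proof (rule nn_integral_FTC_atLeast)
    fix x :: real assume x: "0 \<le> x"
    have "1 / ((p + x) * (q + x)) = (1 / (p + x) - 1 / (q + x)) / (q - p)"
      using x p q False by (simp add: divide_simps)
    then show "((\<lambda>z. (ln (p + z) - ln (q + z)) / (q - p)) has_real_derivative 1 / ((p + x) * (q + x))) (at x)"
      using x p q by (auto intro!: derivative_eq_intros)
  next
    have "((\<lambda>z. ln (p + z) - ln (q + z)) \<longlongrightarrow> 0) at_top" using p q by real_asymp
    then show "((\<lambda>z. (ln (p + z) - ln (q + z)) / (q - p)) \<longlongrightarrow> 0) at_top"
      by (rule tendsto_divide_zero)
  qed (use p q in auto)
  then show ?thesis
    using p q False by (simp add: inv_log_mean_def ln_div minus_divide_left)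
qed

definition log_kernel :: "real \<Rightarrow> real \<Rightarrow> real \<times> real \<Rightarrow> real" where
  "log_kernel p q = (\<lambda>(x, y). indicator ({0<..1} \<times> {0<..1}) (x, y)
                                * (x powr (p - 1) * y powr (q - 1) / - ln (x * y)))"

lemma borel_measurable_log_kernel [measurable]: "log_kernel p q \<in> borel_measurable lborel"
  unfolding log_kernel_def lborel_prod[symmetric] by measurable

lemma log_kernel_nonneg: "log_kernel p q w \<ge> 0"
proof -
  obtain x y where w: "w = (x, y)" by fastforce
  show ?thesis
  proof (cases "x \<in> {0<..1} \<and> y \<in> {0<..1}")
    case True
    then have "0 < x * y" "x * y \<le> 1"
      by (auto intro!: mult_le_one)
    then have "ln (x * y) \<le> 0" by simp
    with True show ?thesis
      unfolding log_kernel_def w by (auto intro!: divide_nonneg_nonpos)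
  qed (simp add: log_kernel_def w)
qed

lemma log_kernel_shift:
  "log_kernel (s + p) (s + q) (x, y) = (x * y) powr s * log_kernel p q (x, y)"
proof (cases "x \<in> {0<..1} \<and> y \<in> {0<..1}")
  case True
  then have "x powr (s + p - 1) = x powr s * x powr (p - 1)"
    and "y powr (s + q - 1) = y powr s * y powr (q - 1)"
    by (simp_all add: powr_add[symmetric] add_diff_eq)
  with True show ?thesis
    unfolding log_kernel_def by (simp add: powr_mult)
qed (simp add: log_kernel_def)

text \<open>At the corner \<open>x = y = 1\<close> the kernel is the junk value of a division by \<open>ln 1 = 0\<close>.\<close>
lemma log_kernel_eq_0:
  assumes "\<not> (x \<in> {0<..1} \<and> y \<in> {0<..1} \<and> x * y < 1)"
  shows "log_kernel p q (x, y) = 0"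
proof (cases "x \<in> {0<..1} \<and> y \<in> {0<..1}")
  case True
  with assms have "x * y = 1"
    using mult_le_one[of x y] by auto
  then show ?thesis
    unfolding log_kernel_def by simp
qed (simp add: log_kernel_def)

lemma log_kernel_eq_nn_integral:
  assumes "w \<noteq> (1, 1)"
  shows "ennreal (log_kernel p q w) = (\<integral>\<^sup>+z. ennreal (fst w powr (p + z - 1) * snd w powr (q + z - 1))
           * indicator ({0<..1} \<times> {0<..1}) w * indicator {0..} z \<partial>lborel)"
proof -
  obtain x y where w: "w = (x, y)" by fastforce
  show ?thesis
  proof (cases "x \<in> {0<..1} \<and> y \<in> {0<..1}")
    case False
    then have "log_kernel p q (x, y) = 0"
      by (intro log_kernel_eq_0) auto
    with False show ?thesis
      unfolding w by simp
  next
    case True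
    have "x * y < 1"
    proof (rule ccontr)
      assume "\<not> x * y < 1"
      moreover have "x * y \<le> x" "x * y \<le> y"
        using True mult_left_le[of y x] mult_left_le_one_le[of y x] by auto
      ultimately have "x = 1" "y = 1"
        using True by auto
      with assms show False
        unfolding w by simp
    qed
    with True have t: "0 < x * y" "x * y < 1" by auto
    define k where "k = x powr (p - 1) * y powr (q - 1)"
    have "(\<integral>\<^sup>+z. ennreal (x powr (p + z - 1) * y powr (q + z - 1)) * indicator {0..} z \<partial>lborel)
        = (\<integral>\<^sup>+z. ennreal k * (ennreal ((x * y) powr z) * indicator {0..} z) \<partial>lborel)"
      using True unfolding k_def
      by (intro nn_integral_cong)
         (simp add: powr_add powr_mult ennreal_mult' mult_ac diff_add_eq[symmetric] add_diff_eq)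
    also have "\<dots> = ennreal k * ennreal (- 1 / ln (x * y))"
      by (simp add: nn_integral_cmult nn_integral_powr_exponent[OF t])
    also have "\<dots> = ennreal (log_kernel p q (x, y))"
      using True t unfolding k_def log_kernel_def
      by (simp add: ennreal_mult'[symmetric] divide_nonpos_neg)
    finally show ?thesis
      using True unfolding w by simp
  qed
qed

lemma nn_integral_unit_square_powr:
  fixes p q :: real
  assumes "p > 0" and "q > 0"
  shows "(\<integral>\<^sup>+w. ennreal (fst w powr (p - 1) * snd w powr (q - 1)) * indicator ({0<..1} \<times> {0<..1}) w \<partial>lborel)
       = ennreal (1 / (p * q))"
proof -
  have "(\<integral>\<^sup>+w. ennreal (fst w powr (p - 1) * snd w powr (q - 1)) * indicator ({0<..1} \<times> {0<..1}) w \<partial>lborel)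
      = (\<integral>\<^sup>+x. \<integral>\<^sup>+y. ennreal (x powr (p - 1)) * indicator {0<..1} x
                        * (ennreal (y powr (q - 1)) * indicator {0<..1} y) \<partial>lborel \<partial>lborel)"
    unfolding lborel_prod[symmetric]
    by (subst lborel.nn_integral_fst[symmetric])
       (auto intro!: nn_integral_cong simp: ennreal_mult' indicator_times mult_ac)
  also have "\<dots> = (\<integral>\<^sup>+x. ennreal (x powr (p - 1)) * indicator {0<..1} x * ennreal (1 / q) \<partial>lborel)"
    by (simp add: nn_integral_cmult nn_integral_powr_unit_interval[OF \<open>q > 0\<close>])
  also have "\<dots> = ennreal (1 / p) * ennreal (1 / q)"
    by (simp add: nn_integral_multc nn_integral_powr_unit_interval[OF \<open>p > 0\<close>])
  finally show ?thesis
    using assms by (simp add: ennreal_mult'[symmetric])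
qed

lemma nn_integral_log_kernel:
  fixes p q :: real
  assumes p: "p > 0" and q: "q > 0"
  shows "(\<integral>\<^sup>+w. ennreal (log_kernel p q w) \<partial>lborel) = ennreal (inv_log_mean p q)"
proof -
  define H where "H = (\<lambda>w z. ennreal (fst w powr (p + z - 1) * snd w powr (q + z - 1))
                           * indicator ({0<..1} \<times> {0<..1}) w * indicator {0..} (z :: real))"
  have "AE w in lborel. ennreal (log_kernel p q w) = (\<integral>\<^sup>+z. H w z \<partial>lborel)"
    using AE_lborel_singleton[of "(1, 1) :: real \<times> real"]
    by eventually_elim (unfold H_def, rule log_kernel_eq_nn_integral)
  then have "(\<integral>\<^sup>+w. ennreal (log_kernel p q w) \<partial>lborel) = (\<integral>\<^sup>+w. \<integral>\<^sup>+z. H w z \<partial>lborel \<partial>lborel)"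
    by (rule nn_integral_cong_AE)
  also have "\<dots> = (\<integral>\<^sup>+z. \<integral>\<^sup>+w. H w z \<partial>lborel \<partial>lborel)"
    by (rule lborel_pair.Fubini'[symmetric]) (unfold H_def lborel_prod[symmetric], measurable)
  also have "\<dots> = (\<integral>\<^sup>+z. ennreal (1 / ((p + z) * (q + z))) * indicator {0..} z \<partial>lborel)"
  proof (rule nn_integral_cong)
    fix z :: real
    show "(\<integral>\<^sup>+w. H w z \<partial>lborel) = ennreal (1 / ((p + z) * (q + z))) * indicator {0..} z"
      using nn_integral_unit_square_powr[of "p + z" "q + z"] p q
      by (cases "z \<ge> 0") (simp_all add: H_def diff_add_eq)
  qed
  also have "\<dots> = ennreal (inv_log_mean p q)"
    by (rule nn_integral_inverse_shifted_product[OF p q])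
  finally show ?thesis .
qed

lemma has_bochner_integral_log_kernel:
  "p > 0 \<Longrightarrow> q > 0 \<Longrightarrow> has_bochner_integral lborel (log_kernel p q) (inv_log_mean p q)"
  by (rule has_bochner_integral_nn_integral)
     (simp_all add: log_kernel_nonneg inv_log_mean_nonneg nn_integral_log_kernel)

lemma sums_integral_dominated:
  fixes F :: "nat \<Rightarrow> 'a \<Rightarrow> 'b :: {banach, second_countable_topology}"
  assumes F: "\<And>m. has_bochner_integral M (F m) (s m)"
    and f: "integrable M f"
    and lim: "AE w in M. (\<lambda>m. F m w) sums f w"
    and bound: "\<And>N. AE w in M. norm (\<Sum>m<N. F m w) \<le> norm (f w)"
  shows "s sums integral\<^sup>L M f"
proof -
  have partial: "has_bochner_integral M (\<lambda>w. \<Sum>m<N. F m w) (\<Sum>m<N. s m)" for N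
    by (rule has_bochner_integral_sum) (use F in auto)
  have "(\<lambda>N. integral\<^sup>L M (\<lambda>w. \<Sum>m<N. F m w)) \<longlonglongrightarrow> integral\<^sup>L M f"
  proof (rule integral_dominated_convergence[where w = "\<lambda>w. norm (f w)"])
    show "(\<lambda>w. \<Sum>m<N. F m w) \<in> borel_measurable M" for N
      using partial by (rule borel_measurable_has_bochner_integral)
    show "AE w in M. (\<lambda>N. \<Sum>m<N. F m w) \<longlonglongrightarrow> f w"
      using lim by (simp add: sums_def)
  qed (use f bound in auto)
  moreover have "integral\<^sup>L M (\<lambda>w. \<Sum>m<N. F m w) = (\<Sum>m<N. s m)" for N
    using partial by (rule has_bochner_integral_integral_eq)
  ultimately show ?thesis
    unfolding sums_def by simp
qed

lemma geometric_sums_Suc: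
  fixes u Q :: real
  assumes "0 \<le> u" and "u < 1"
  shows "(\<lambda>m. u ^ Suc m * Q) sums (u / (1 - u) * Q)"
  using sums_mult[OF geometric_sums[of u], of "u * Q"] assms
  by (simp add: mult_ac)

lemma geometric_partial_sums_Suc_le:
  fixes u Q :: real
  assumes "0 \<le> u" and "u < 1"
  shows "\<bar>\<Sum>m<N. u ^ Suc m * Q\<bar> \<le> \<bar>u / (1 - u) * Q\<bar>"
proof -
  have sums: "(\<lambda>m. u ^ Suc m) sums (u / (1 - u))"
    using geometric_sums_Suc[OF assms, of 1] by simp
  have "(\<Sum>m<N. u ^ Suc m) \<le> (\<Sum>m. u ^ Suc m)"
    by (rule sum_le_suminf[OF sums_summable[OF sums]]) (use \<open>0 \<le> u\<close> in auto)
  then have "(\<Sum>m<N. u ^ Suc m) \<le> u / (1 - u)"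
    by (simp only: sums_unique[OF sums, symmetric])
  have "\<bar>\<Sum>m<N. u ^ Suc m * Q\<bar> = (\<Sum>m<N. u ^ Suc m) * \<bar>Q\<bar>"
    using \<open>0 \<le> u\<close> by (simp add: sum_distrib_right[symmetric] abs_mult sum_nonneg)
  also have "\<dots> \<le> u / (1 - u) * \<bar>Q\<bar>"
    using \<open>(\<Sum>m<N. u ^ Suc m) \<le> u / (1 - u)\<close> by (rule mult_right_mono) simp
  also have "\<dots> = \<bar>u / (1 - u) * Q\<bar>"
    using assms by (simp add: abs_mult)
  finally show ?thesis .
qed

lemma integrand36_eq_0:
  assumes "(x, y) \<in> {0..1} \<times> {0..1}" and "\<not> (x \<in> {0<..1} \<and> y \<in> {0<..1} \<and> x * y < 1)"
  shows "integrand36 a b c d (x, y) = 0"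
proof -
  have "x * y \<le> 1"
    using assms(1) by (auto intro!: mult_le_one)
  with assms have "x * y = 0 \<or> x * y = 1"
    by auto
  then show ?thesis
    unfolding integrand36_def by auto
qed

lemma integrand36_geometric_expansion:
  fixes a b c d :: real
  assumes "b > 0"
  obtains u Q :: real where "0 \<le> u" and "u < 1"
    and "indicator ({0..1} \<times> {0..1}) w * integrand36 a b c d w = u / (1 - u) * Q"
    and "\<And>m. log_kernel (b * real (Suc m) + d) (b * real (Suc m) + d) w
              - log_kernel (b * real (Suc m) + a) (b * real (Suc m) + c) w = u ^ Suc m * Q"
proof -
  obtain x y where w: "w = (x, y)" by fastforce
  define Q where "Q = log_kernel d d w - log_kernel a c w"
  have shift: "log_kernel (b * real (Suc m) + d) (b * real (Suc m) + d) w
                 - log_kernel (b * real (Suc m) + a) (b * real (Suc m) + c) w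
               = (x * y) powr (b * real (Suc m)) * Q" for m
    unfolding Q_def w by (simp add: log_kernel_shift right_diff_distrib)
  show thesis
  proof (cases "x \<in> {0<..1} \<and> y \<in> {0<..1} \<and> x * y < 1")
    case True
    then have t: "0 < x * y" "x * y < 1" by auto
    define u where "u = (x * y) powr b"
    have u: "0 \<le> u" "u < 1"
      using t powr_less_mono2[OF \<open>b > 0\<close>, of "x * y" 1] by (auto simp: u_def)
    have pow: "(x * y) powr (b * real (Suc m)) = u ^ Suc m" for m
    proof -
      have "(x * y) powr (b * real (Suc m)) = u powr real (Suc m)"
        by (simp add: u_def powr_powr)
      also have "\<dots> = u ^ Suc m"
        unfolding u_def by (rule powr_realpow) (use True in simp)
      finally show ?thesis .
    qed
    have "log_kernel (b * real (Suc m) + d) (b * real (Suc m) + d) w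
            - log_kernel (b * real (Suc m) + a) (b * real (Suc m) + c) w = u ^ Suc m * Q" for m
      by (simp only: shift pow)
    moreover have "indicator ({0..1} \<times> {0..1}) w * integrand36 a b c d w = u / (1 - u) * Q"
    proof -
      have "ln (x * y) \<noteq> 0" "1 - u \<noteq> 0"
        using t u by auto
      then show ?thesis
        using True unfolding w Q_def u_def integrand36_def log_kernel_def
        by (simp add: powr_mult field_simps)
    qed
    ultimately show thesis
      using that u by blast
  next
    case False
    then have "Q = 0"
      unfolding Q_def w by (simp add: log_kernel_eq_0)
    moreover have "indicator ({0..1} \<times> {0..1}) w * integrand36 a b c d w = 0"
      using False integrand36_eq_0[of x y] unfolding w by (auto simp: indicator_def)
    ultimately show thesis
      using that[of 0 Q] shift by simp
  qed
qed

lemma sum_ln_add_diff_eq_ln_Gamma_series: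
  fixes A C :: real
  assumes "A > 0" and "C > 0"
  shows "(\<Sum>k<Suc n. ln (C + real k) - ln (A + real k))
           = (C - A) * ln (real n) - (ln_Gamma_series C n - ln_Gamma_series A n)"
proof -
  have "ln (z / real k + 1) = ln (z + real k) - ln (real k)" if "z > 0" "k \<in> {1..n}" for z k
  proof -
    have "z / real k + 1 = (z + real k) / real k"
      using that by (simp add: field_simps)
    then show ?thesis
      using that by (simp add: ln_div)
  qed
  then have shifted: "(\<Sum>k=1..n. ln (C + real k) - ln (A + real k))
                      = (\<Sum>k=1..n. ln (C / real k + 1) - ln (A / real k + 1))"
    using assms by (intro sum.cong) auto
  have split_first: "(\<Sum>k<Suc n. g k) = g 0 + (\<Sum>k=1..n. g k)" for g :: "nat \<Rightarrow> real"
    by (induction n) simp_all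
  have "(\<Sum>k<Suc n. ln (C + real k) - ln (A + real k))
          = ln C - ln A + (\<Sum>k=1..n. ln (C + real k) - ln (A + real k))"
    by (subst split_first) simp
  also have "\<dots> = (C - A) * ln (real n) - (ln_Gamma_series C n - ln_Gamma_series A n)"
    unfolding shifted ln_Gamma_series_def by (simp add: sum_subtractf algebra_simps)
  finally show ?thesis .
qed

lemma sums_Digamma_ln_Gamma:
  fixes A C D :: real
  assumes A: "A > 0" and C: "C > 0" and D: "D > 0" and "A \<noteq> C"
  shows "(\<lambda>m. inverse (D + real m) - (ln (C + real m) - ln (A + real m)) / (C - A))
           sums ((ln_Gamma C - ln_Gamma A) / (C - A) - Digamma D)"
proof -
  define digamma_approx where
    "digamma_approx = (\<lambda>m. ln (real m) - (\<Sum>k<m. inverse (D + real k)))"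
  define G where "G = (\<lambda>n. ln_Gamma_series C n - ln_Gamma_series A n)"
  have partial: "(\<Sum>m<Suc n. inverse (D + real m) - (ln (C + real m) - ln (A + real m)) / (C - A))
      = (ln (real (Suc n)) - ln (real n)) - digamma_approx (Suc n) + G n / (C - A)" for n
  proof -
    have "(\<Sum>m<Suc n. inverse (D + real m) - (ln (C + real m) - ln (A + real m)) / (C - A))
        = (\<Sum>m<Suc n. inverse (D + real m)) - (\<Sum>m<Suc n. ln (C + real m) - ln (A + real m)) / (C - A)"
      by (simp only: sum_subtractf[of "\<lambda>m. inverse (D + real m)"] sum_divide_distrib)
    also have "\<dots> = (\<Sum>m<Suc n. inverse (D + real m)) - ((C - A) * ln (real n) - G n) / (C - A)"
      by (simp only: sum_ln_add_diff_eq_ln_Gamma_series[OF A C] G_def)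
    also have "\<dots> = (ln (real (Suc n)) - ln (real n)) - digamma_approx (Suc n) + G n / (C - A)"
      using \<open>A \<noteq> C\<close> unfolding digamma_approx_def by (simp add: field_simps del: sum.lessThan_Suc)
    finally show ?thesis .
  qed
  have "(\<lambda>n::nat. ln (real (Suc n)) - ln (real n)) \<longlonglongrightarrow> 0"
    by real_asymp
  moreover have "digamma_approx \<longlonglongrightarrow> Digamma D"
    using Digamma_LIMSEQ[of D] D unfolding digamma_approx_def by simp
  then have "(\<lambda>n. digamma_approx (Suc n)) \<longlonglongrightarrow> Digamma D"
    by (rule LIMSEQ_Suc)
  moreover have "G \<longlonglongrightarrow> ln_Gamma C - ln_Gamma A"
    unfolding G_def by (intro tendsto_diff ln_Gamma_real_LIMSEQ A C)
  ultimately have "(\<lambda>n. (ln (real (Suc n)) - ln (real n)) - digamma_approx (Suc n) + G n / (C - A))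
      \<longlonglongrightarrow> 0 - Digamma D + (ln_Gamma C - ln_Gamma A) / (C - A)"
    by (intro tendsto_intros) (use \<open>A \<noteq> C\<close> in auto)
  then have "(\<lambda>n. \<Sum>m<Suc n. inverse (D + real m) - (ln (C + real m) - ln (A + real m)) / (C - A))
      \<longlonglongrightarrow> (ln_Gamma C - ln_Gamma A) / (C - A) - Digamma D"
    unfolding partial by (rule tendsto_eq_rhs) simp
  then show ?thesis
    unfolding sums_def by (rule LIMSEQ_imp_Suc)
qed

definition series36_term :: "real \<Rightarrow> real \<Rightarrow> real \<Rightarrow> real \<Rightarrow> nat \<Rightarrow> real" where
  "series36_term a b c d n = 1 / (b * real (Suc n) + d)
                              - ln (1 + (c - a) / (b * real (Suc n) + a)) / (c - a)"

lemma series36_term_eq_inv_log_mean: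
  assumes "a \<noteq> c" and "b * real (Suc n) + a > 0"
  shows "series36_term a b c d n = inv_log_mean (b * real (Suc n) + d) (b * real (Suc n) + d)
                                   - inv_log_mean (b * real (Suc n) + a) (b * real (Suc n) + c)"
proof -
  have "1 + (c - a) / (b * real (Suc n) + a) = (b * real (Suc n) + c) / (b * real (Suc n) + a)"
    using assms(2) by (simp add: field_simps)
  then show ?thesis
    using assms(1) unfolding series36_term_def inv_log_mean_def by simp
qed

lemma series36_term_sums_integral:
  fixes a b c d :: real
  assumes "b > 0" and "a + b > 0" and "c + b > 0" and "d + b > 0" and "a \<noteq> c"
    and "set_integrable lborel ({0..1} \<times> {0..1}) (integrand36 a b c d)"
  shows "series36_term a b c d sums (LINT p:{0..1} \<times> {0..1}|lborel. integrand36 a b c d p)"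
proof -
  have pos: "b * real (Suc m) + e > 0" if "e + b > 0" for m e
  proof -
    have "b * real (Suc m) + e = (e + b) + b * real m"
      by (simp add: algebra_simps)
    moreover have "0 \<le> b * real m"
      using \<open>b > 0\<close> by simp
    ultimately show ?thesis
      using that by linarith
  qed
  define f where "f = (\<lambda>w. indicator ({0..1} \<times> {0..1}) w * integrand36 a b c d w)"
  define F where "F = (\<lambda>m w. log_kernel (b * real (Suc m) + d) (b * real (Suc m) + d) w
                               - log_kernel (b * real (Suc m) + a) (b * real (Suc m) + c) w)"
  have "series36_term a b c d sums integral\<^sup>L lborel f"
  proof (rule sums_integral_dominated[where F = F])
    show "has_bochner_integral lborel (F m) (series36_term a b c d m)" for m
      unfolding F_def series36_term_eq_inv_log_mean[OF \<open>a \<noteq> c\<close> pos[OF \<open>a + b > 0\<close>]]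
      using assms pos by (intro has_bochner_integral_diff has_bochner_integral_log_kernel) auto
    show "integrable lborel f"
      using assms(6) by (simp add: set_integrable_def f_def)
    have "(\<lambda>m. F m w) sums f w \<and> norm (\<Sum>m<N. F m w) \<le> norm (f w)" for w N
    proof -
      obtain u Q where "0 \<le> u" "u < 1" "f w = u / (1 - u) * Q" "\<And>m. F m w = u ^ Suc m * Q"
        using integrand36_geometric_expansion[OF \<open>b > 0\<close>] unfolding f_def F_def by metis
      then show ?thesis
        using geometric_sums_Suc geometric_partial_sums_Suc_le by simp
    qed
    then show "AE w in lborel. (\<lambda>m. F m w) sums f w"
      and "AE w in lborel. norm (\<Sum>m<N. F m w) \<le> norm (f w)" for N
      by simp_all
  qed
  then show ?thesis
    by (simp add: set_lebesgue_integral_def f_def)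
qed

lemma series36_term_sums_Gamma:
  fixes a b c d :: real
  assumes b: "b > 0" and "a + b > 0" and "c + b > 0" and "d + b > 0" and "a \<noteq> c"
  shows "series36_term a b c d
           sums (ln (Gamma ((b + c) / b) / Gamma ((a + b) / b)) / (c - a) - Digamma ((b + d) / b) / b)"
proof -
  define A C D where "A = (a + b) / b" and "C = (b + c) / b" and "D = (b + d) / b"
  have pos: "A > 0" "C > 0" "D > 0"
    using assms by (simp_all add: A_def C_def D_def add.commute)
  have "A \<noteq> C"
    using b \<open>a \<noteq> c\<close> by (simp add: A_def C_def field_simps)
  have c_a: "c - a = b * (C - A)"
    using b by (simp add: A_def C_def field_simps)
  have "series36_term a b c d m
          = (inverse (D + real m) - (ln (C + real m) - ln (A + real m)) / (C - A)) / b" for m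
  proof -
    have d_eq: "b * real (Suc m) + d = b * (D + real m)"
      and a_eq: "b * real (Suc m) + a = b * (A + real m)"
      using b by (simp_all add: A_def D_def field_simps)
    have ln_eq: "ln (1 + (c - a) / (b * (A + real m))) = ln (C + real m) - ln (A + real m)"
    proof -
      have "A + real m \<noteq> 0"
        using pos by simp
      then have "1 + (C - A) / (A + real m) = (C + real m) / (A + real m)"
        by (simp add: field_simps)
      then have "1 + (c - a) / (b * (A + real m)) = (C + real m) / (A + real m)"
        unfolding c_a using b by simp
      then show ?thesis
        using pos by (simp add: ln_div)
    qed
    show ?thesis
      unfolding series36_term_def d_eq a_eq ln_eq unfolding c_a
      by (simp add: inverse_eq_divide diff_divide_distrib mult.commute[of b])
  qed
  then have "series36_term a b c d
      = (\<lambda>m. (inverse (D + real m) - (ln (C + real m) - ln (A + real m)) / (C - A)) / b)"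
    by (rule ext)
  moreover have "ln (Gamma C / Gamma A) / (c - a) - Digamma D / b
      = ((ln_Gamma C - ln_Gamma A) / (C - A) - Digamma D) / b"
  proof -
    have "Gamma A \<noteq> 0" "Gamma C \<noteq> 0"
      using Gamma_real_pos[of A] Gamma_real_pos[of C] pos by linarith+
    then have "ln (Gamma C / Gamma A) = ln_Gamma C - ln_Gamma A"
      using pos by (simp add: ln_div ln_Gamma_real_pos)
    then show ?thesis
      unfolding c_a by (simp add: diff_divide_distrib mult.commute[of b])
  qed
  ultimately show ?thesis
    unfolding A_def [symmetric] C_def [symmetric] D_def [symmetric]
    using sums_divide[OF sums_Digamma_ln_Gamma[OF pos \<open>A \<noteq> C\<close>], of b] by simp
qed

theorem theorem3p6:
  fixes a b c d :: real
  assumes "b > 0" and "a + b > 0" and "c + b > 0" and "d + b > 0" and "a \<noteq> c"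
    and "set_integrable lborel ({0..1} \<times> {0..1}) (integrand36 a b c d)"
  shows "(\<lambda>n::nat. 1 / (b * real (Suc n) + d)
            - ln (1 + (c - a) / (b * real (Suc n) + a)) / (c - a))
         sums (LINT p:{0..1} \<times> {0..1}|lborel. integrand36 a b c d p)
       \<and> (LINT p:{0..1} \<times> {0..1}|lborel. integrand36 a b c d p)
         = ln (Gamma ((b + c) / b) / Gamma ((a + b) / b)) / (c - a) - Digamma ((b + d) / b) / b"
proof -
  have integral: "series36_term a b c d sums (LINT p:{0..1} \<times> {0..1}|lborel. integrand36 a b c d p)"
    using assms by (rule series36_term_sums_integral)
  moreover have "series36_term a b c d
      sums (ln (Gamma ((b + c) / b) / Gamma ((a + b) / b)) / (c - a) - Digamma ((b + d) / b) / b)"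
    using assms(1-5) by (rule series36_term_sums_Gamma)
  ultimately have "(LINT p:{0..1} \<times> {0..1}|lborel. integrand36 a b c d p)
      = ln (Gamma ((b + c) / b) / Gamma ((a + b) / b)) / (c - a) - Digamma ((b + d) / b) / b"
    by (rule sums_unique2)
  with integral show ?thesis
    unfolding series36_term_def by blast
qed

end
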